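(* Let $(X\cup Y,\mathbf{d})$ be a finite metric space, $\epsilon \in (0,\frac{1}{2})$ and $S \subseteq Y$. For each $x\in X$ let $N_x$ be an $\epsilon \cdot \mathbf{d}(x, S)$-net of $B_Y(\pi_S(x), \mathbf{d}(x,S)/\epsilon)$, and for $x\in X$, $y\in Y$ define $\widehat{\mathbf{d}}_S(x,y) = \min_{u\in N_x} \mathbf{d}(x,u) + \mathbf{d}(u,y)$. Then for all $x\in X$ and $y\in Y$, \[ \mathbf{d}(x,y) \le \widehat{\mathbf{d}}_S(x,y) \le (1+4\epsilon) \cdot \mathbf{d}(x,y) + 2 \epsilon \cdot \mathbf{d}(x,S). \]
   Context: For $S\subseteq X\cup Y$, $x$ and $r>0$, $B_S(x,r)=\{y\in S:\mathbf{d}(x,y)\le r\}$. $\pi_S(x)$ denotes a point of $S$ closest to $x$ and $\mathbf{d}(x,S)=\mathbf{d}(x,\pi_S(x))$. For $\rho>0$, a $\rho$-net of a set $B$ is a subset $N\subseteq B$ whose distinct points are pairwise at distance at least $\rho$ and such that every point of $B$ is within distance $\rho$ of some point of $N$. The net $N_x$ need not contain $\pi_S(x)$. *)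

theory Defs
  imports "HOL-Analysis.Analysis"
begin

definition ballS :: "'a::metric_space set \<Rightarrow> 'a \<Rightarrow> real \<Rightarrow> 'a set" where
  "ballS S x r = {y \<in> S. dist x y \<le> r}"

definition is_net :: "real \<Rightarrow> 'a::metric_space set \<Rightarrow> 'a set \<Rightarrow> bool" where
  "is_net rho B N \<longleftrightarrow> N \<subseteq> B \<and>
     (\<forall>u\<in>N. \<forall>v\<in>N. u \<noteq> v \<longrightarrow> dist u v \<ge> rho) \<and>
     (\<forall>b\<in>B. \<exists>u\<in>N. dist b u \<le> rho)"

definition is_closest_point :: "'a::metric_space set \<Rightarrow> 'a \<Rightarrow> 'a \<Rightarrow> bool" where
  "is_closest_point S x p \<longleftrightarrow> p \<in> S \<and> (\<forall>s\<in>S. dist x p \<le> dist x s)"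

definition dhat :: "('a::metric_space \<Rightarrow> 'a set) \<Rightarrow> 'a \<Rightarrow> 'a \<Rightarrow> real" where
  "dhat N x y = Min ((\<lambda>u. dist x u + dist u y) ` N x)"

end

theory Submission
  imports Defs
begin

text \<open>
  The lower bound is the triangle inequality. For the upper bound let \<open>p = \<pi>\<^sub>S(x)\<close> and
  \<open>D = d(x,S) = d(x,p)\<close>. If \<open>y\<close> lies in the ball \<open>B\<^sub>Y(p, D/\<epsilon>)\<close>, some net point \<open>u\<close> is
  \<open>\<epsilon>D\<close>-close to \<open>y\<close> and the detour through \<open>u\<close> costs at most \<open>2\<epsilon>D\<close>. Otherwise \<open>y\<close> is so far
  from \<open>p\<close> that \<open>D < 2\<epsilon> d(x,y)\<close>, and the detour through a net point \<open>\<epsilon>D\<close>-close to \<open>p\<close>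
  costs at most \<open>2D + 2\<epsilon>D \<le> 4\<epsilon> d(x,y) + 2\<epsilon>D\<close>.
\<close>

lemma infdist_eq_dist_closest_point:
  assumes "is_closest_point S x p"
  shows "infdist x S = dist x p"
proof (rule antisym)
  have "p \<in> S" using assms unfolding is_closest_point_def by simp
  then show "infdist x S \<le> dist x p" by (rule infdist_le)
next
  show "dist x p \<le> infdist x S"
    using assms unfolding is_closest_point_def infdist_def
    by (auto intro!: cINF_greatest)
qed

lemma dist_le_dhat:
  assumes "finite (N x)" and "N x \<noteq> {}"
  shows "dist x y \<le> dhat N x y"
  unfolding dhat_def using assms by (auto intro!: Min.boundedI dist_triangle)

lemma dhat_le_detour:
  assumes "finite (N x)" and "u \<in> N x"
  shows "dhat N x y \<le> dist x u + dist u y"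
  unfolding dhat_def using assms by (auto intro: Min_le)

lemma detour_le_near:
  fixes x u y :: "'a::metric_space"
  shows "dist x u + dist u y \<le> dist x y + 2 * dist y u"
  using dist_triangle[of x u y] dist_commute[of u y] by linarith

lemma detour_le_far:
  fixes x p u y :: "'a::metric_space"
  assumes "0 < eps" and "eps \<le> 1/2"
    and "dist p u \<le> eps * dist x p" and "dist x p / eps < dist p y"
  shows "dist x u + dist u y \<le> (1 + 4 * eps) * dist x y + 2 * eps * dist x p"
proof -
  define D where "D = dist x p"
  have py: "dist p y \<le> D + dist x y"
    unfolding D_def using dist_triangle[of p y x] dist_commute[of x p] by linarith
  have "dist x u + dist u y \<le> (D + eps * D) + (eps * D + dist p y)"
    using dist_triangle[of x u p] dist_triangle[of u y p] dist_commute[of u p] assms(3)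
    unfolding D_def by linarith
  also have "\<dots> \<le> 2 * D + 2 * eps * D + dist x y" using py by linarith
  also have "\<dots> \<le> (1 + 4 * eps) * dist x y + 2 * eps * D"
  proof -
    have "D < eps * dist p y"
      using assms(1,4) unfolding D_def by (simp add: field_simps)
    also have "\<dots> \<le> eps * (D + dist x y)"
      using py assms(1) by (simp add: mult_left_mono)
    finally have "D < eps * (D + dist x y)" .
    moreover have "eps * D \<le> D / 2"
      using assms(2) mult_right_mono[of eps "1/2" D] D_def by simp
    ultimately show ?thesis by (simp add: algebra_simps)
  qed
  finally show ?thesis unfolding D_def .
qed

lemma dhat_le_via_net:
  fixes x p y :: "'a::metric_space"
  assumes "0 < eps" and "eps \<le> 1/2" and "finite (N x)"
    and "is_net (eps * dist x p) (ballS Y p (dist x p / eps)) (N x)"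
    and "p \<in> Y" and "y \<in> Y"
  shows "dhat N x y \<le> (1 + 4 * eps) * dist x y + 2 * eps * dist x p"
proof -
  define D where "D = dist x p"
  have cover: "\<exists>u\<in>N x. dist b u \<le> eps * D" if "b \<in> Y" "dist p b \<le> D / eps" for b
    using assms(4) that unfolding is_net_def ballS_def D_def by auto
  show ?thesis
  proof (cases "dist p y \<le> D / eps")
    case True
    then obtain u where u: "u \<in> N x" "dist y u \<le> eps * D" using cover assms(6) by blast
    have "dhat N x y \<le> dist x y + 2 * dist y u"
      using dhat_le_detour[where N = N and x = x and y = y, OF assms(3) u(1)]
        detour_le_near[of x u y]
      by linarith
    also have "\<dots> \<le> dist x y + 2 * eps * D" using u(2) by linarith
    also have "\<dots> \<le> (1 + 4 * eps) * dist x y + 2 * eps * D"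
      using assms(1) by (simp add: algebra_simps)
    finally show ?thesis unfolding D_def .
  next
    case False
    obtain u where "u \<in> N x" "dist p u \<le> eps * D"
      using cover[of p] assms(1,5) by (auto simp: D_def)
    then show ?thesis
      using dhat_le_detour[where N = N and x = x, OF assms(3)] detour_le_far[OF assms(1,2)] False
      unfolding D_def by (meson not_le order_trans)
  qed
qed

theorem lemma3p2:
  fixes X Y S :: "'a::metric_space set" and eps :: real
    and pi :: "'a \<Rightarrow> 'a" and N :: "'a \<Rightarrow> 'a set"
  assumes "finite X" and "finite Y"
    and "0 < eps" and "eps < 1/2"
    and "S \<subseteq> Y" and "S \<noteq> {}"
    and "\<And>x. x \<in> X \<Longrightarrow> is_closest_point S x (pi x)"
    and "\<And>x. x \<in> X \<Longrightarrow>
           is_net (eps * infdist x S) (ballS Y (pi x) (infdist x S / eps)) (N x)"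
  shows "\<forall>x\<in>X. \<forall>y\<in>Y. dist x y \<le> dhat N x y \<and>
           dhat N x y \<le> (1 + 4 * eps) * dist x y + 2 * eps * infdist x S"
proof (intro ballI conjI)
  fix x y assume x: "x \<in> X" and y: "y \<in> Y"
  have closest: "is_closest_point S x (pi x)" using assms(7)[OF x] .
  then have D: "infdist x S = dist x (pi x)" by (rule infdist_eq_dist_closest_point)
  have p: "pi x \<in> Y" using closest assms(5) unfolding is_closest_point_def by auto
  have net: "is_net (eps * dist x (pi x)) (ballS Y (pi x) (dist x (pi x) / eps)) (N x)"
    using assms(8)[OF x] unfolding D .
  have fin: "finite (N x)"
    using net assms(2) unfolding is_net_def ballS_def by (auto intro: finite_subset)
  have "pi x \<in> ballS Y (pi x) (dist x (pi x) / eps)"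
    using p assms(3) unfolding ballS_def by simp
  then have "N x \<noteq> {}" using net unfolding is_net_def by blast
  then show "dist x y \<le> dhat N x y" using dist_le_dhat fin by blast
  show "dhat N x y \<le> (1 + 4 * eps) * dist x y + 2 * eps * infdist x S"
    using dhat_le_via_net[where N = N and x = x, OF assms(3) _ fin net p y] assms(4) unfolding D by simp
qed

end
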